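(* Let $F:\mathcal P(\mathbb R^d)\to\mathbb R$ be in $\mathcal C^1$ and assume its second order linear functional derivative $\frac{\delta^2F}{\delta m^2}:\mathcal P(\mathbb R^d)\times\mathbb R^d\times\mathbb R^d\to\mathbb R$ exists and is jointly continuous, and that there is $L>0$ such that for any random variables $\eta_1,\eta_2$ with $\mathbb E|\eta_i|^2<\infty$, $i=1,2$, $$\mathbb E\Big[\sup_{\nu\in\mathcal P_2(\mathbb R^d)}\Big|\frac{\delta F}{\delta m}(\nu,\eta_1)\Big|\Big]+\mathbb E\Big[\sup_{\nu\in\mathcal P_2(\mathbb R^d)}\Big|\frac{\delta^2F}{\delta m^2}(\nu,\eta_1,\eta_2)\Big|\Big]\le L.$$ If there is $m^*\in\mathcal P_2(\mathbb R^d)$ with $F(m^* )=\inf_{m\in\mathcal P_2(\mathbb R^d)}F(m)$, then for every $N\in\mathbb N$ $$\Big|\inf_{(x_i)_{i=1}^N\subset\mathbb R^d}F\Big(\frac1N\sum_{i=1}^N\delta_{x_i}\Big)-F(m^* )\Big|\le\frac{2L}{N}.$$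
   Context: $\mathcal P(\mathbb R^d)$ is the set of Borel probability measures on $\mathbb R^d$, $\mathcal P_2(\mathbb R^d)$ those with finite second moment. A function $F:\mathcal P(\mathbb R^d)\to\mathbb R$ is in $\mathcal C^1$ if there is a bounded continuous function $\frac{\delta F}{\delta m}:\mathcal P(\mathbb R^d)\times\mathbb R^d\to\mathbb R$ (the linear functional derivative, normalised by $\int\frac{\delta F}{\delta m}(m,x)m(dx)=0$) such that for all $m,m'$: $F(m')-F(m)=\int_0^1\int_{\mathbb R^d}\frac{\delta F}{\delta m}((1-\lambda)m+\lambda m',x)(m'-m)(dx)\,d\lambda$. The second order linear functional derivative $\frac{\delta^2F}{\delta m^2}(m,x,y)$ is the linear functional derivative (in the same sense, in the variable $y$) of the map $m\mapsto\frac{\delta F}{\delta m}(m,x)$ for fixed $x$. *)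

theory Defs
  imports "HOL-Probability.Probability"
begin

definition Pm :: "'a::euclidean_space measure set" where
  "Pm = {m. prob_space m \<and> sets m = sets borel}"

definition P2 :: "'a::euclidean_space measure set" where
  "P2 = {m \<in> Pm. integrable m (\<lambda>x. norm x ^ 2)}"

definition mix :: "real \<Rightarrow> 'a::euclidean_space measure \<Rightarrow> 'a measure \<Rightarrow> 'a measure" where
  "mix l m m' = measure_of UNIV (sets borel)
     (\<lambda>A. ennreal (1 - l) * emeasure m A + ennreal l * emeasure m' A)"

definition empirical :: "nat \<Rightarrow> (nat \<Rightarrow> 'a::euclidean_space) \<Rightarrow> 'a measure" where
  "empirical N x = measure_of UNIV (sets borel)
     (\<lambda>A. ennreal ((\<Sum>i<N. indicator A (x i)) / real N))"

definition weak_conv_seq :: "(nat \<Rightarrow> 'a::euclidean_space measure) \<Rightarrow> 'a measure \<Rightarrow> bool" where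
  "weak_conv_seq ms m \<longleftrightarrow>
     (\<forall>f :: 'a \<Rightarrow> real. continuous_on UNIV f \<and> bounded (range f) \<longrightarrow>
        (\<lambda>n. \<integral>x. f x \<partial>ms n) \<longlonglongrightarrow> (\<integral>x. f x \<partial>m))"

text \<open>Joint continuity on P(R^d) x R^d (weak topology, which is metrizable, so sequential).\<close>
definition jcont :: "('a::euclidean_space measure \<Rightarrow> 'a \<Rightarrow> real) \<Rightarrow> bool" where
  "jcont D \<longleftrightarrow> (\<forall>ms m xs x. (\<forall>n. ms n \<in> Pm) \<and> m \<in> Pm \<and> weak_conv_seq ms m \<and> xs \<longlonglongrightarrow> x
      \<longrightarrow> (\<lambda>n. D (ms n) (xs n)) \<longlonglongrightarrow> D m x)"

definition jcont2 :: "('a::euclidean_space measure \<Rightarrow> 'a \<Rightarrow> 'a \<Rightarrow> real) \<Rightarrow> bool" where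
  "jcont2 D \<longleftrightarrow> (\<forall>ms m xs x ys y. (\<forall>n. ms n \<in> Pm) \<and> m \<in> Pm \<and> weak_conv_seq ms m
      \<and> xs \<longlonglongrightarrow> x \<and> ys \<longlonglongrightarrow> y
      \<longrightarrow> (\<lambda>n. D (ms n) (xs n) (ys n)) \<longlonglongrightarrow> D m x y)"

text \<open>D is the (normalised) linear functional derivative of F.\<close>
definition is_lfd :: "('a::euclidean_space measure \<Rightarrow> real) \<Rightarrow> ('a measure \<Rightarrow> 'a \<Rightarrow> real) \<Rightarrow> bool" where
  "is_lfd F D \<longleftrightarrow>
     (\<exists>C. \<forall>m\<in>Pm. \<forall>x. \<bar>D m x\<bar> \<le> C) \<and> jcont D \<and>
     (\<forall>m\<in>Pm. (\<integral>x. D m x \<partial>m) = 0) \<and>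
     (\<forall>m\<in>Pm. \<forall>m'\<in>Pm.
        ((\<lambda>l. (\<integral>x. D (mix l m m') x \<partial>m') - (\<integral>x. D (mix l m m') x \<partial>m))
          has_integral (F m' - F m)) {0..1})"

definition C1 :: "('a::euclidean_space measure \<Rightarrow> real) \<Rightarrow> bool" where
  "C1 F \<longleftrightarrow> (\<exists>D. is_lfd F D)"

end

theory Submission
  imports Defs
begin

text \<open>Interpolate between m* and an empirical measure through
  rho_k = (1/N) sum_{j<k} \<delta>(x_j) + (1 - k/N) m*, choosing the atoms greedily:
  x_k is a point where dF rho_k lies below its m*-mean. Since rho_{k+1} - rho_k = (\<delta>(x_k) - m*)/N,
  the first order term of F(rho_{k+1}) - F(rho_k) is non-positive, and the second order
  derivative, being bounded by L, makes the remainder at most 2L/N^2. After N steps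
  F(empirical) \<le> F(m*) + 2L/N, while F(m*) is a lower bound because empirical measures lie in P2.
  The expectation bound, applied to Dirac masses, already yields the uniform bounds
  |dF| \<le> L and |d2F| \<le> L.\<close>

definition finite_mixture ::
    "'i set \<Rightarrow> ('i \<Rightarrow> real) \<Rightarrow> ('i \<Rightarrow> 'a::euclidean_space measure) \<Rightarrow> 'a measure" where
  "finite_mixture J c M =
     measure_of UNIV (sets borel) (\<lambda>A. \<Sum>j\<in>J. ennreal (c j) * emeasure (M j) A)"

lemma sets_finite_mixture [simp, measurable_cong]: "sets (finite_mixture J c M) = sets borel"
  unfolding finite_mixture_def by simp (metis sets.sigma_sets_eq space_borel)

lemma space_finite_mixture [simp]: "space (finite_mixture J c M) = UNIV"
  unfolding finite_mixture_def by (simp add: space_measure_of_conv)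

lemma emeasure_finite_mixture:
  fixes M :: "'i \<Rightarrow> 'a::euclidean_space measure"
  assumes sets_M: "\<And>j. j \<in> J \<Longrightarrow> sets (M j) = sets borel" and A: "A \<in> sets borel"
  shows "emeasure (finite_mixture J c M) A = (\<Sum>j\<in>J. ennreal (c j) * emeasure (M j) A)"
  unfolding finite_mixture_def
proof (rule emeasure_measure_of_sigma[OF _ _ _ A])
  show "sigma_algebra UNIV (sets borel)"
    using sets.sigma_algebra_axioms[of borel] by simp
  show "positive (sets borel) (\<lambda>A. \<Sum>j\<in>J. ennreal (c j) * emeasure (M j) A)"
    by (simp add: positive_def)
  show "countably_additive (sets borel) (\<lambda>A. \<Sum>j\<in>J. ennreal (c j) * emeasure (M j) A)"
  proof (rule countably_additiveI)
    fix B :: "nat \<Rightarrow> 'a set" assume B: "range B \<subseteq> sets borel" "disjoint_family B"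
    have "(\<Sum>i. \<Sum>j\<in>J. ennreal (c j) * emeasure (M j) (B i))
        = (\<Sum>j\<in>J. \<Sum>i. ennreal (c j) * emeasure (M j) (B i))"
      by (rule suminf_sum) auto
    also have "\<dots> = (\<Sum>j\<in>J. ennreal (c j) * emeasure (M j) (\<Union>i. B i))"
      using B sets_M by (intro sum.cong refl) (simp add: suminf_emeasure)
    finally show "(\<Sum>i. \<Sum>j\<in>J. ennreal (c j) * emeasure (M j) (B i))
        = (\<Sum>j\<in>J. ennreal (c j) * emeasure (M j) (\<Union>i. B i))" .
  qed
qed

lemma nn_integral_finite_mixture:
  fixes M :: "'i \<Rightarrow> 'a::euclidean_space measure"
  assumes J: "finite J" and sets_M: "\<And>j. j \<in> J \<Longrightarrow> sets (M j) = sets borel"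
    and f: "f \<in> borel_measurable borel"
  shows "(\<integral>\<^sup>+x. f x \<partial>finite_mixture J c M) = (\<Sum>j\<in>J. ennreal (c j) * (\<integral>\<^sup>+x. f x \<partial>M j))"
  using f
proof (induct rule: borel_measurable_induct)
  case (cong f g)
  then show ?case by simp
next
  case (set A)
  then show ?case
    using sets_M by (simp add: emeasure_finite_mixture[OF sets_M] cong: sum.cong)
next
  case (mult u a)
  have u: "u \<in> borel_measurable (M j)" if "j \<in> J" for j
    by (simp add: mult(2) measurable_cong_sets[OF sets_M[OF that] refl])
  from mult show ?case
    by (simp add: nn_integral_cmult u sum_distrib_left mult.left_commute cong: sum.cong)
next
  case (add u v)
  have uv: "u \<in> borel_measurable (M j)" "v \<in> borel_measurable (M j)" if "j \<in> J" for j
    by (simp_all add: add(1,4) measurable_cong_sets[OF sets_M[OF that] refl])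
  from add show ?case
    by (simp add: nn_integral_add uv sum.distrib distrib_left cong: sum.cong)
next
  case (seq U)
  have U: "U i \<in> borel_measurable (M j)" if "j \<in> J" for i j
    by (simp add: seq(1) measurable_cong_sets[OF sets_M[OF that] refl])
  have "(\<integral>\<^sup>+x. (SUP i. U i) x \<partial>finite_mixture J c M) = (SUP i. (\<integral>\<^sup>+x. U i x \<partial>finite_mixture J c M))"
    using seq by (simp add: nn_integral_monotone_convergence_SUP image_comp)
  also have "\<dots> = (SUP i. (\<Sum>j\<in>J. ennreal (c j) * (\<integral>\<^sup>+x. U i x \<partial>M j)))"
    using seq by simp
  also have "\<dots> = (\<Sum>j\<in>J. (SUP i. ennreal (c j) * (\<integral>\<^sup>+x. U i x \<partial>M j)))"
    using seq(4) J
    by (intro ennreal_SUP_sum) (auto simp: incseq_def le_fun_def intro!: mult_left_mono nn_integral_mono)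
  also have "\<dots> = (\<Sum>j\<in>J. ennreal (c j) * (\<integral>\<^sup>+x. (SUP i. U i) x \<partial>M j))"
    using seq U
    by (intro sum.cong refl)
       (simp add: SUP_mult_left_ennreal[symmetric] nn_integral_monotone_convergence_SUP image_comp)
  finally show ?case .
qed

lemma has_bochner_integral_finite_mixture:
  fixes f :: "'a::euclidean_space \<Rightarrow> real"
  assumes J: "finite J" and sets_M: "\<And>j. j \<in> J \<Longrightarrow> sets (M j) = sets borel"
    and c: "\<And>j. j \<in> J \<Longrightarrow> 0 \<le> c j" and f: "f \<in> borel_measurable borel"
    and integrable: "\<And>j. j \<in> J \<Longrightarrow> integrable (M j) f"
  shows "has_bochner_integral (finite_mixture J c M) f (\<Sum>j\<in>J. c j * integral\<^sup>L (M j) f)"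
proof -
  have nonneg: "has_bochner_integral (finite_mixture J c M) g (\<Sum>j\<in>J. c j * integral\<^sup>L (M j) g)"
    if g: "g \<in> borel_measurable borel" "\<And>x. 0 \<le> g x" "\<And>j. j \<in> J \<Longrightarrow> integrable (M j) g"
    for g :: "'a \<Rightarrow> real"
  proof (rule has_bochner_integral_nn_integral)
    have "(\<integral>\<^sup>+x. ennreal (g x) \<partial>finite_mixture J c M) = (\<Sum>j\<in>J. ennreal (c j) * (\<integral>\<^sup>+x. ennreal (g x) \<partial>M j))"
      using g(1) by (intro nn_integral_finite_mixture[OF J sets_M]) auto
    also have "\<dots> = (\<Sum>j\<in>J. ennreal (c j * integral\<^sup>L (M j) g))"
      using g c by (intro sum.cong refl) (simp add: nn_integral_eq_integral ennreal_mult)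
    also have "\<dots> = ennreal (\<Sum>j\<in>J. c j * integral\<^sup>L (M j) g)"
      using g c by (intro sum_ennreal) simp
    finally show "(\<integral>\<^sup>+x. ennreal (g x) \<partial>finite_mixture J c M) = ennreal (\<Sum>j\<in>J. c j * integral\<^sup>L (M j) g)" .
    show "0 \<le> (\<Sum>j\<in>J. c j * integral\<^sup>L (M j) g)"
      using g c by (intro sum_nonneg mult_nonneg_nonneg integral_nonneg) auto
  qed (use g in auto)
  have "has_bochner_integral (finite_mixture J c M) (\<lambda>x. max 0 (f x) - max 0 (- f x))
      ((\<Sum>j\<in>J. c j * integral\<^sup>L (M j) (\<lambda>x. max 0 (f x))) - (\<Sum>j\<in>J. c j * integral\<^sup>L (M j) (\<lambda>x. max 0 (- f x))))"
    using f integrable by (intro has_bochner_integral_diff nonneg) auto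
  moreover have parts: "(\<lambda>x. max 0 (f x) - max 0 (- f x)) = f"
    by (auto simp: max_def)
  moreover have "integral\<^sup>L (M j) (\<lambda>x. max 0 (f x)) - integral\<^sup>L (M j) (\<lambda>x. max 0 (- f x))
      = integral\<^sup>L (M j) f" if "j \<in> J" for j
    using integrable[OF that] by (subst Bochner_Integration.integral_diff[symmetric]) (auto simp: parts)
  ultimately show ?thesis
    by (simp add: right_diff_distrib[symmetric] sum_subtractf[symmetric] cong: sum.cong)
qed

lemma PmD:
  assumes "m \<in> Pm"
  shows Pm_prob_space: "prob_space m" and sets_Pm: "sets m = sets borel" and space_Pm: "space m = UNIV"
  using assms sets_eq_imp_space_eq[of m borel] unfolding Pm_def by auto

lemma P2_subset_Pm: "P2 \<subseteq> Pm"
  unfolding P2_def by blast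

lemma integrable_return:
  fixes f :: "'a \<Rightarrow> 'b::{banach, second_countable_topology}"
  assumes "x \<in> space M" "f \<in> borel_measurable M"
  shows "integrable (return M x) f"
  using assms by (simp add: integrable_iff_bounded nn_integral_return)

lemma return_in_P2: "return borel x \<in> P2"
  unfolding P2_def Pm_def by (simp add: prob_space_return integrable_return)

lemma finite_mixture_in_P2:
  fixes M :: "'i \<Rightarrow> 'a::euclidean_space measure"
  assumes J: "finite J" and M: "\<And>j. j \<in> J \<Longrightarrow> M j \<in> P2"
    and c: "\<And>j. j \<in> J \<Longrightarrow> 0 \<le> c j" and c_sum: "sum c J = 1"
  shows "finite_mixture J c M \<in> P2"
proof -
  have sets_M: "\<And>j. j \<in> J \<Longrightarrow> sets (M j) = sets borel"
    using M P2_subset_Pm by (auto dest: sets_Pm)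
  have "emeasure (finite_mixture J c M) UNIV = (\<Sum>j\<in>J. ennreal (c j) * emeasure (M j) UNIV)"
    by (simp add: emeasure_finite_mixture[OF sets_M])
  also have "\<dots> = (\<Sum>j\<in>J. ennreal (c j))"
  proof (intro sum.cong refl)
    fix j assume "j \<in> J"
    then have "M j \<in> Pm" using M P2_subset_Pm by blast
    then show "ennreal (c j) * emeasure (M j) UNIV = ennreal (c j)"
      by (metis Pm_prob_space space_Pm prob_space.emeasure_space_1 mult.right_neutral)
  qed
  also have "\<dots> = ennreal (sum c J)"
    using c by (rule sum_ennreal)
  finally have "prob_space (finite_mixture J c M)"
    using c_sum by (intro prob_spaceI) simp
  moreover have "has_bochner_integral (finite_mixture J c M) (\<lambda>x. norm x ^ 2)
      (\<Sum>j\<in>J. c j * integral\<^sup>L (M j) (\<lambda>x. norm x ^ 2))"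
    using M unfolding P2_def by (intro has_bochner_integral_finite_mixture[OF J sets_M c]) auto
  ultimately show ?thesis
    unfolding P2_def Pm_def by (auto intro: integrable.intros)
qed

lemma mix_eq_finite_mixture:
  "mix l m m' = finite_mixture {0::nat, 1} (\<lambda>j. if j = 0 then 1 - l else l) (\<lambda>j. if j = 0 then m else m')"
  unfolding mix_def finite_mixture_def by (intro measure_of_eq) simp_all

lemma mix_in_P2: "m \<in> P2 \<Longrightarrow> m' \<in> P2 \<Longrightarrow> 0 \<le> l \<Longrightarrow> l \<le> 1 \<Longrightarrow> mix l m m' \<in> P2"
  unfolding mix_eq_finite_mixture by (intro finite_mixture_in_P2) auto

lemma integral_mix:
  fixes f :: "'a::euclidean_space \<Rightarrow> real"
  assumes "m \<in> Pm" "m' \<in> Pm" "0 \<le> l" "l \<le> 1" "f \<in> borel_measurable borel"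
    and "integrable m f" "integrable m' f"
  shows "integral\<^sup>L (mix l m m') f = (1 - l) * integral\<^sup>L m f + l * integral\<^sup>L m' f"
  unfolding mix_eq_finite_mixture
  by (subst has_bochner_integral_integral_eq[OF has_bochner_integral_finite_mixture])
     (use assms in \<open>auto simp: sets_Pm\<close>)

lemma empirical_eq_finite_mixture:
  "empirical N x = finite_mixture {..<N} (\<lambda>_. 1 / real N) (\<lambda>i. return borel (x i))"
  unfolding empirical_def finite_mixture_def
proof (intro measure_of_eq)
  fix A assume "A \<in> sigma_sets UNIV (sets (borel::'a measure))"
  then have A: "A \<in> sets borel" by (metis sets.sigma_sets_eq space_borel)
  have "(\<Sum>i<N. ennreal (1 / real N) * emeasure (return borel (x i)) A)
      = (\<Sum>i<N. ennreal (indicator A (x i) / real N))"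
  proof (intro sum.cong refl)
    fix i
    show "ennreal (1 / real N) * emeasure (return borel (x i)) A = ennreal (indicator A (x i) / real N)"
      using A by (cases "x i \<in> A") simp_all
  qed
  also have "\<dots> = ennreal (\<Sum>i<N. indicator A (x i) / real N)"
    by (rule sum_ennreal) simp
  finally
  show "ennreal ((\<Sum>i<N. indicator A (x i)) / real N)
      = (\<Sum>i<N. ennreal (1 / real N) * emeasure (return borel (x i)) A)"
    by (simp add: sum_divide_distrib)
qed simp

lemma empirical_in_P2: "0 < N \<Longrightarrow> empirical N x \<in> P2"
  unfolding empirical_eq_finite_mixture by (intro finite_mixture_in_P2) (auto simp: return_in_P2)

text \<open>(1/N) sum_{j<k} \<delta>(x j) + (1 - k/N) m, the index None carrying the mass of m.\<close>

definition partial_empirical :: "nat \<Rightarrow> 'a measure \<Rightarrow> nat \<Rightarrow> (nat \<Rightarrow> 'a) \<Rightarrow> 'a::euclidean_space measure" where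
  "partial_empirical N m k x = finite_mixture (insert None (Some ` {..<k}))
     (case_option ((real N - real k) / real N) (\<lambda>_. 1 / real N))
     (case_option m (\<lambda>j. return borel (x j)))"

lemma partial_empirical_in_P2:
  assumes "m \<in> P2" "k \<le> N" "0 < N"
  shows "partial_empirical N m k x \<in> P2"
  unfolding partial_empirical_def
proof (rule finite_mixture_in_P2)
  show "sum (case_option ((real N - real k) / real N) (\<lambda>_. 1 / real N)) (insert None (Some ` {..<k})) = 1"
    using assms by (simp add: sum.reindex field_simps)
qed (use assms return_in_P2 in \<open>auto split: option.split\<close>)

lemma partial_empirical_0:
  assumes "m \<in> Pm" "0 < N"
  shows "partial_empirical N m 0 x = m"
proof -
  have "partial_empirical N m 0 x = measure_of (space m) (sets m) (emeasure m)"
    using assms by (simp add: partial_empirical_def finite_mixture_def space_Pm sets_Pm)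
  then show ?thesis
    by (simp add: measure_of_of_measure)
qed

lemma partial_empirical_eq_empirical: "partial_empirical N m N x = empirical N x"
  unfolding partial_empirical_def empirical_eq_finite_mixture finite_mixture_def
  by (simp add: sum.reindex)

lemma integral_partial_empirical:
  fixes f :: "'a::euclidean_space \<Rightarrow> real"
  assumes "m \<in> Pm" "k \<le> N" "f \<in> borel_measurable borel" "integrable m f"
  shows "integral\<^sup>L (partial_empirical N m k x) f
    = (\<Sum>j<k. f (x j)) / real N + (real N - real k) / real N * integral\<^sup>L m f"
  unfolding partial_empirical_def
  by (subst has_bochner_integral_integral_eq[OF has_bochner_integral_finite_mixture])
     (use assms in \<open>auto simp: sets_Pm integrable_return integral_return sum.reindex sum_divide_distrib
        split: option.split\<close>)

lemma integral_partial_empirical_Suc: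
  fixes f :: "'a::euclidean_space \<Rightarrow> real"
  assumes "m \<in> Pm" "k < N" "f \<in> borel_measurable borel" "integrable m f"
  shows "integral\<^sup>L (partial_empirical N m (Suc k) (x(k := z))) f - integral\<^sup>L (partial_empirical N m k x) f
    = (f z - integral\<^sup>L m f) / real N"
proof -
  have "(\<Sum>j<Suc k. f ((x(k := z)) j)) = (\<Sum>j<k. f (x j)) + f z"
    by (auto intro: sum.cong)
  then show ?thesis
    using assms by (simp add: integral_partial_empirical) (simp add: field_simps)
qed

lemma integrable_bounded_Pm:
  fixes f :: "'a::euclidean_space \<Rightarrow> real"
  assumes m: "m \<in> Pm" and f: "f \<in> borel_measurable borel" and bound: "\<And>x. \<bar>f x\<bar> \<le> C"
  shows "integrable m f"
proof -
  interpret prob_space m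
    using m by (rule Pm_prob_space)
  show ?thesis
    using f bound by (intro integrable_const_bound[where B=C]) (auto simp: measurable_cong_sets[OF sets_Pm[OF m] refl])
qed

lemma abs_integral_le_bound_Pm:
  fixes f :: "'a::euclidean_space \<Rightarrow> real"
  assumes m: "m \<in> Pm" and f: "f \<in> borel_measurable borel" and bound: "\<And>x. \<bar>f x\<bar> \<le> C"
  shows "\<bar>integral\<^sup>L m f\<bar> \<le> C"
proof -
  interpret prob_space m
    using m by (rule Pm_prob_space)
  have "integrable m f"
    using assms by (rule integrable_bounded_Pm)
  then have "integral\<^sup>L m f \<le> C" "- C \<le> integral\<^sup>L m f"
    using abs_le_D1[OF bound] abs_le_D2[OF bound]
    by (auto intro!: integral_le_const integral_ge_const simp: minus_le_iff)
  then show ?thesis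
    by simp
qed

lemma exists_le_integral_Pm:
  fixes f :: "'a::euclidean_space \<Rightarrow> real"
  assumes m: "m \<in> Pm" and f: "f \<in> borel_measurable borel" and bound: "\<And>x. \<bar>f x\<bar> \<le> C"
  shows "\<exists>z. f z \<le> integral\<^sup>L m f"
proof (rule ccontr)
  interpret prob_space m
    using m by (rule Pm_prob_space)
  assume "\<nexists>z. f z \<le> integral\<^sup>L m f"
  then have "integral\<^sup>L m f < integral\<^sup>L m f"
    using integrable_bounded_Pm[OF assms] by (intro expectation_greater) (auto simp: not_le)
  then show False by simp
qed

lemma lfd_continuous_on:
  fixes D :: "'a::euclidean_space measure \<Rightarrow> 'a \<Rightarrow> real"
  assumes "is_lfd G D" "m \<in> Pm"
  shows "continuous_on UNIV (D m)"
proof (rule continuous_on_sequentiallyI)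
  fix u :: "nat \<Rightarrow> 'a" and a assume "u \<longlonglongrightarrow> a"
  moreover have "jcont D"
    using assms(1) unfolding is_lfd_def by blast
  ultimately show "(\<lambda>n. D m (u n)) \<longlonglongrightarrow> D m a"
    using assms(2) unfolding jcont_def by (elim allE[of _ "\<lambda>_. m"]) (simp add: weak_conv_seq_def)
qed

lemma lfd_borel_measurable: "is_lfd G D \<Longrightarrow> m \<in> Pm \<Longrightarrow> D m \<in> borel_measurable borel"
  by (rule borel_measurable_continuous_onI[OF lfd_continuous_on])

lemma lfd_has_integral:
  assumes "is_lfd G D" "m \<in> Pm" "m' \<in> Pm"
  shows "((\<lambda>l. integral\<^sup>L m' (D (mix l m m')) - integral\<^sup>L m (D (mix l m m'))) has_integral (G m' - G m)) {0..1}"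
  using assms unfolding is_lfd_def by blast

lemma has_integral_affine_01: "((\<lambda>s. a + b * s) has_integral (a + b / 2)) {0..1::real}"
proof -
  have "((\<lambda>s. b * s) has_integral b * ((1\<^sup>2 - 0\<^sup>2) / 2)) {0..1::real}"
    by (intro has_integral_mult_right ident_has_integral) simp
  from has_integral_add[OF has_integral_const_real[of a 0 1] this] show ?thesis
    by simp
qed

lemma lfd_mix_increment_bound:
  fixes G :: "'a::euclidean_space measure \<Rightarrow> real"
  assumes D: "is_lfd G D"
    and D_bound: "\<And>\<nu> y. \<nu> \<in> P2 \<Longrightarrow> \<bar>D \<nu> y\<bar> \<le> B"
    and \<rho>: "\<rho> \<in> P2" and \<rho>': "\<rho>' \<in> P2"
    and test: "\<And>f. f \<in> borel_measurable borel \<Longrightarrow> (\<And>y. \<bar>f y\<bar> \<le> B) \<Longrightarrow>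
      \<bar>integral\<^sup>L \<rho>' f - integral\<^sup>L \<rho> f\<bar> \<le> \<epsilon>"
    and s: "0 \<le> s" "s \<le> 1"
  shows "\<bar>G (mix s \<rho> \<rho>') - G \<rho>\<bar> \<le> s * \<epsilon>"
proof -
  define \<nu> where "\<nu> = mix s \<rho> \<rho>'"
  have \<nu>: "\<nu> \<in> P2"
    unfolding \<nu>_def using \<rho> \<rho>' s by (rule mix_in_P2)
  have "0 \<le> B"
    using D_bound[OF \<rho>] abs_ge_zero order_trans by blast
  then have "0 \<le> s * \<epsilon>"
    using test[of "\<lambda>_. 0"] s by simp
  moreover have "\<bar>integral\<^sup>L \<nu> (D (mix t \<rho> \<nu>)) - integral\<^sup>L \<rho> (D (mix t \<rho> \<nu>))\<bar> \<le> s * \<epsilon>"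
    if t: "t \<in> {0..1}" for t
  proof -
    define g where "g = D (mix t \<rho> \<nu>)"
    have "mix t \<rho> \<nu> \<in> P2"
      using \<rho> \<nu> t by (intro mix_in_P2) auto
    then have g: "g \<in> borel_measurable borel" "\<And>y. \<bar>g y\<bar> \<le> B"
      unfolding g_def using D D_bound P2_subset_Pm by (auto intro: lfd_borel_measurable)
    have "integral\<^sup>L \<nu> g - integral\<^sup>L \<rho> g = s * (integral\<^sup>L \<rho>' g - integral\<^sup>L \<rho> g)"
      unfolding \<nu>_def using \<rho> \<rho>' s g P2_subset_Pm
      by (subst integral_mix) (auto intro: integrable_bounded_Pm simp: algebra_simps)
    then show ?thesis
      unfolding g_def[symmetric] using test[OF g] s by (simp add: abs_mult mult_left_mono)
  qed
  moreover have "((\<lambda>t. integral\<^sup>L \<nu> (D (mix t \<rho> \<nu>)) - integral\<^sup>L \<rho> (D (mix t \<rho> \<nu>)))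
      has_integral (G \<nu> - G \<rho>)) {0..1}"
    using \<rho> \<nu> P2_subset_Pm by (intro lfd_has_integral[OF D]) auto
  ultimately have "norm (G \<nu> - G \<rho>) \<le> s * \<epsilon> * measure lborel {0..1::real}"
    by (intro has_integral_bound_real[where S="{}"]) auto
  then show ?thesis
    unfolding \<nu>_def by simp
qed

lemma lfd_step_bound:
  fixes F :: "'a::euclidean_space measure \<Rightarrow> real"
  assumes D: "is_lfd F D"
    and D_bound: "\<And>\<nu> y. \<nu> \<in> P2 \<Longrightarrow> \<bar>D \<nu> y\<bar> \<le> B"
    and \<rho>: "\<rho> \<in> P2" and \<rho>': "\<rho>' \<in> P2" and m: "m \<in> P2" and K: "0 < K"
    \<comment> \<open>\<rho>' - \<rho> = (\<delta> z - m) / K, tested against bounded measurable functions\<close>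
    and step: "\<And>f C. f \<in> borel_measurable borel \<Longrightarrow> (\<And>y. \<bar>f y\<bar> \<le> C) \<Longrightarrow>
      integral\<^sup>L \<rho>' f - integral\<^sup>L \<rho> f = (f z - integral\<^sup>L m f) / K"
    and D_lipschitz: "\<And>s y. 0 \<le> s \<Longrightarrow> s \<le> 1 \<Longrightarrow> \<bar>D (mix s \<rho> \<rho>') y - D \<rho> y\<bar> \<le> s * c"
  shows "F \<rho>' - F \<rho> \<le> (D \<rho> z - integral\<^sup>L m (D \<rho>)) / K + c / K"
proof -
  define a where "a = (D \<rho> z - integral\<^sup>L m (D \<rho>)) / K"
  have D\<rho>: "D \<rho> \<in> borel_measurable borel" "\<And>y. \<bar>D \<rho> y\<bar> \<le> B"
    using D D_bound \<rho> P2_subset_Pm by (auto intro: lfd_borel_measurable)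
  have "F \<rho>' - F \<rho> \<le> a + (2 * c / K) / 2"
  proof (rule has_integral_le[OF lfd_has_integral[OF D] has_integral_affine_01])
    fix s :: real assume "s \<in> {0..1}"
    then have s: "0 \<le> s" "s \<le> 1" by auto
    define f where "f = D (mix s \<rho> \<rho>')"
    have "mix s \<rho> \<rho>' \<in> P2"
      using \<rho> \<rho>' s by (rule mix_in_P2)
    then have f: "f \<in> borel_measurable borel" "\<And>y. \<bar>f y\<bar> \<le> B"
      unfolding f_def using D D_bound P2_subset_Pm by (auto intro: lfd_borel_measurable)
    have close: "\<And>y. \<bar>f y - D \<rho> y\<bar> \<le> s * c"
      unfolding f_def using s by (rule D_lipschitz)
    have "\<bar>integral\<^sup>L m (\<lambda>y. f y - D \<rho> y)\<bar> \<le> s * c"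
      using m P2_subset_Pm f D\<rho> close by (intro abs_integral_le_bound_Pm) auto
    moreover have "integral\<^sup>L m (\<lambda>y. f y - D \<rho> y) = integral\<^sup>L m f - integral\<^sup>L m (D \<rho>)"
      using m P2_subset_Pm f D\<rho> by (intro Bochner_Integration.integral_diff integrable_bounded_Pm) auto
    ultimately have "f z - integral\<^sup>L m f \<le> D \<rho> z - integral\<^sup>L m (D \<rho>) + 2 * (s * c)"
      using close[of z] by linarith
    then have "(f z - integral\<^sup>L m f) / K \<le> (D \<rho> z - integral\<^sup>L m (D \<rho>) + 2 * (s * c)) / K"
      using K by (simp add: divide_right_mono)
    also have "\<dots> = a + 2 * c / K * s"
      unfolding a_def using K by (simp add: field_simps)
    finally have "(f z - integral\<^sup>L m f) / K \<le> a + 2 * c / K * s" .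
    then show "integral\<^sup>L \<rho>' (D (mix s \<rho> \<rho>')) - integral\<^sup>L \<rho> (D (mix s \<rho> \<rho>')) \<le> a + 2 * c / K * s"
      using step[OF f] unfolding f_def by simp
  qed (use \<rho> \<rho>' P2_subset_Pm in auto)
  then show ?thesis
    unfolding a_def by simp
qed

lemma nn_integral_return_ge:
  assumes "x \<in> space M" "{x} \<in> sets M"
  shows "g x \<le> (\<integral>\<^sup>+z. g z \<partial>return M x)"
proof -
  have "g x = (\<integral>\<^sup>+z. g x * indicator {x} z \<partial>return M x)"
    using assms by (simp add: nn_integral_cmult_indicator)
  also have "\<dots> \<le> (\<integral>\<^sup>+z. g z \<partial>return M x)"
    by (intro nn_integral_mono) (simp split: split_indicator)
  finally show ?thesis .
qed

lemma lfd_bounds_of_expectation_bound: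
  fixes dF :: "'a::euclidean_space measure \<Rightarrow> 'a \<Rightarrow> real" and d2F :: "'a measure \<Rightarrow> 'a \<Rightarrow> 'a \<Rightarrow> real"
  assumes bound: "\<forall>\<mu> :: ('a \<times> 'a) measure.
        prob_space \<mu> \<and> sets \<mu> = sets borel
        \<and> integrable \<mu> (\<lambda>z. norm (fst z) ^ 2) \<and> integrable \<mu> (\<lambda>z. norm (snd z) ^ 2)
        \<longrightarrow> (\<integral>\<^sup>+ z. (SUP \<nu>\<in>P2. ennreal \<bar>dF \<nu> (fst z)\<bar>) \<partial>\<mu>)
          + (\<integral>\<^sup>+ z. (SUP \<nu>\<in>P2. ennreal \<bar>d2F \<nu> (fst z) (snd z)\<bar>) \<partial>\<mu>) \<le> ennreal L"
    and L: "0 \<le> L" and \<nu>: "\<nu> \<in> P2" and \<nu>': "\<nu>' \<in> P2"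
  shows "\<bar>dF \<nu> x\<bar> + \<bar>d2F \<nu>' x y\<bar> \<le> L"
proof -
  let ?\<delta> = "return borel (x, y)"
  have "ennreal \<bar>dF \<nu> x\<bar> \<le> (SUP \<nu>\<in>P2. ennreal \<bar>dF \<nu> (fst (x, y))\<bar>)"
    using \<nu> by (auto intro: SUP_upper)
  also have "\<dots> \<le> (\<integral>\<^sup>+ z. (SUP \<nu>\<in>P2. ennreal \<bar>dF \<nu> (fst z)\<bar>) \<partial>?\<delta>)"
    by (rule nn_integral_return_ge) auto
  finally have dF_le: "ennreal \<bar>dF \<nu> x\<bar> \<le> \<dots>" .
  have "ennreal \<bar>d2F \<nu>' x y\<bar> \<le> (SUP \<nu>\<in>P2. ennreal \<bar>d2F \<nu> (fst (x, y)) (snd (x, y))\<bar>)"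
    using \<nu>' by (auto intro: SUP_upper)
  also have "\<dots> \<le> (\<integral>\<^sup>+ z. (SUP \<nu>\<in>P2. ennreal \<bar>d2F \<nu> (fst z) (snd z)\<bar>) \<partial>?\<delta>)"
    by (rule nn_integral_return_ge) auto
  finally have d2F_le: "ennreal \<bar>d2F \<nu>' x y\<bar> \<le> \<dots>" .
  have "(\<integral>\<^sup>+ z. (SUP \<nu>\<in>P2. ennreal \<bar>dF \<nu> (fst z)\<bar>) \<partial>?\<delta>)
      + (\<integral>\<^sup>+ z. (SUP \<nu>\<in>P2. ennreal \<bar>d2F \<nu> (fst z) (snd z)\<bar>) \<partial>?\<delta>) \<le> ennreal L"
  proof (rule bound[rule_format])
    have "(\<lambda>z::'a \<times> 'a. norm (fst z) ^ 2) \<in> borel_measurable borel"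
      "(\<lambda>z::'a \<times> 'a. norm (snd z) ^ 2) \<in> borel_measurable borel"
      by (intro borel_measurable_continuous_onI continuous_intros)+
    then show "prob_space ?\<delta> \<and> sets ?\<delta> = sets borel
      \<and> integrable ?\<delta> (\<lambda>z. norm (fst z) ^ 2) \<and> integrable ?\<delta> (\<lambda>z. norm (snd z) ^ 2)"
      by (simp add: prob_space_return integrable_return)
  qed
  with add_mono[OF dF_le d2F_le] have "ennreal \<bar>dF \<nu> x\<bar> + ennreal \<bar>d2F \<nu>' x y\<bar> \<le> ennreal L"
    by (rule order_trans)
  then have "ennreal (\<bar>dF \<nu> x\<bar> + \<bar>d2F \<nu>' x y\<bar>) \<le> ennreal L"
    by (subst ennreal_plus) auto
  then show ?thesis
    using ennreal_le_iff[OF L] by blast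
qed

context
  fixes F :: "'a::euclidean_space measure \<Rightarrow> real" and dF :: "'a measure \<Rightarrow> 'a \<Rightarrow> real"
    and d2F :: "'a measure \<Rightarrow> 'a \<Rightarrow> 'a \<Rightarrow> real" and L :: real and m :: "'a measure" and N :: nat
  assumes dF: "is_lfd F dF"
    and d2F: "\<And>x. is_lfd (\<lambda>\<nu>. dF \<nu> x) (\<lambda>\<nu> y. d2F \<nu> x y)"
    and dF_bound: "\<And>\<nu> x. \<nu> \<in> P2 \<Longrightarrow> \<bar>dF \<nu> x\<bar> \<le> L"
    and d2F_bound: "\<And>\<nu> x y. \<nu> \<in> P2 \<Longrightarrow> \<bar>d2F \<nu> x y\<bar> \<le> L"
    and m: "m \<in> P2" and N: "0 < N"
begin

lemma greedy_step:
  assumes k: "k < N"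
  shows "\<exists>z. F (partial_empirical N m (Suc k) (x(k := z))) \<le> F (partial_empirical N m k x) + 2 * L / real N ^ 2"
proof -
  define \<rho> where "\<rho> = partial_empirical N m k x"
  have \<rho>: "\<rho> \<in> P2"
    unfolding \<rho>_def using m k N by (intro partial_empirical_in_P2) auto
  have m_Pm: "m \<in> Pm" and \<rho>_Pm: "\<rho> \<in> Pm"
    using m \<rho> P2_subset_Pm by auto
  obtain z where z: "dF \<rho> z \<le> integral\<^sup>L m (dF \<rho>)"
    using exists_le_integral_Pm[OF m_Pm lfd_borel_measurable[OF dF \<rho>_Pm] dF_bound[OF \<rho>]] by blast
  define \<rho>' where "\<rho>' = partial_empirical N m (Suc k) (x(k := z))"
  have \<rho>': "\<rho>' \<in> P2"
    unfolding \<rho>'_def using m k N by (intro partial_empirical_in_P2) auto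
  have step: "integral\<^sup>L \<rho>' f - integral\<^sup>L \<rho> f = (f z - integral\<^sup>L m f) / real N"
    if f: "f \<in> borel_measurable borel" "\<And>y. \<bar>f y\<bar> \<le> C" for f C
    unfolding \<rho>_def \<rho>'_def using m_Pm k f
    by (intro integral_partial_empirical_Suc) (auto intro: integrable_bounded_Pm)
  have "\<bar>integral\<^sup>L \<rho>' f - integral\<^sup>L \<rho> f\<bar> \<le> 2 * L / real N"
    if f: "f \<in> borel_measurable borel" "\<And>y. \<bar>f y\<bar> \<le> L" for f
  proof -
    have "\<bar>f z - integral\<^sup>L m f\<bar> \<le> 2 * L"
      using f(2)[of z] abs_integral_le_bound_Pm[OF m_Pm f] by linarith
    then show ?thesis
      using N by (simp add: step[OF f] divide_right_mono)
  qed
  then have dF_lipschitz: "\<bar>dF (mix s \<rho> \<rho>') y - dF \<rho> y\<bar> \<le> s * (2 * L / real N)"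
    if "0 \<le> s" "s \<le> 1" for s y
    using d2F d2F_bound \<rho> \<rho>' that by (intro lfd_mix_increment_bound[where B=L]) auto
  have "F \<rho>' - F \<rho> \<le> (dF \<rho> z - integral\<^sup>L m (dF \<rho>)) / real N + 2 * L / real N / real N"
    using N step dF_lipschitz by (intro lfd_step_bound[OF dF dF_bound \<rho> \<rho>' m]) auto
  moreover have "(dF \<rho> z - integral\<^sup>L m (dF \<rho>)) / real N \<le> 0"
    using z by (simp add: divide_nonpos_pos N)
  ultimately have "F \<rho>' \<le> F \<rho> + 2 * L / real N ^ 2"
    by (simp add: power2_eq_square)
  then show ?thesis
    unfolding \<rho>_def \<rho>'_def by blast
qed

lemma exists_partial_empirical_le:
  "k \<le> N \<Longrightarrow> \<exists>x. F (partial_empirical N m k x) \<le> F m + real k * (2 * L / real N ^ 2)"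
proof (induction k)
  case 0
  show ?case
    using m N P2_subset_Pm by (auto simp: partial_empirical_0)
next
  case (Suc k)
  then obtain x where "F (partial_empirical N m k x) \<le> F m + real k * (2 * L / real N ^ 2)"
    by auto
  moreover obtain z where
    "F (partial_empirical N m (Suc k) (x(k := z))) \<le> F (partial_empirical N m k x) + 2 * L / real N ^ 2"
    using greedy_step Suc.prems by (metis Suc_le_lessD)
  moreover have "real (Suc k) * (2 * L / real N ^ 2) = real k * (2 * L / real N ^ 2) + 2 * L / real N ^ 2"
    by (simp add: add_divide_distrib ring_distribs)
  ultimately show ?case
    by (intro exI[of _ "x(k := z)"]) linarith
qed

end

theorem theorem2p2:
  fixes F :: "'a::euclidean_space measure \<Rightarrow> real"
    and dF :: "'a measure \<Rightarrow> 'a \<Rightarrow> real"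
    and d2F :: "'a measure \<Rightarrow> 'a \<Rightarrow> 'a \<Rightarrow> real"
    and L :: real and mstar :: "'a measure" and N :: nat
  assumes C1: "C1 F"
    and dF: "is_lfd F dF"
    and d2F: "\<forall>x. is_lfd (\<lambda>m. dF m x) (\<lambda>m y. d2F m x y)"
    and d2F_cont: "jcont2 d2F"
    and Lpos: "L > 0"
    and bound: "\<forall>\<mu> :: ('a \<times> 'a) measure.
        prob_space \<mu> \<and> sets \<mu> = sets borel
        \<and> integrable \<mu> (\<lambda>z. norm (fst z) ^ 2) \<and> integrable \<mu> (\<lambda>z. norm (snd z) ^ 2)
        \<longrightarrow> (\<integral>\<^sup>+ z. (SUP \<nu>\<in>P2. ennreal \<bar>dF \<nu> (fst z)\<bar>) \<partial>\<mu>)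
          + (\<integral>\<^sup>+ z. (SUP \<nu>\<in>P2. ennreal \<bar>d2F \<nu> (fst z) (snd z)\<bar>) \<partial>\<mu>) \<le> ennreal L"
    and mstar: "mstar \<in> P2"
    and minimiser: "\<forall>m\<in>P2. F mstar \<le> F m"
    and N: "N \<ge> 1"
  shows "\<bar>(INF x :: nat \<Rightarrow> 'a. F (empirical N x)) - F mstar\<bar> \<le> 2 * L / real N"
proof -
  have sum_bound: "\<bar>dF \<nu> x\<bar> + \<bar>d2F \<nu> x y\<bar> \<le> L" if "\<nu> \<in> P2" for \<nu> x y
    using lfd_bounds_of_expectation_bound[OF bound _ that that] Lpos by simp
  have dF_bound: "\<bar>dF \<nu> x\<bar> \<le> L" if "\<nu> \<in> P2" for \<nu> x
    using sum_bound[OF that, of x x] abs_ge_zero[of "d2F \<nu> x x"] by linarith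
  have d2F_bound: "\<bar>d2F \<nu> x y\<bar> \<le> L" if "\<nu> \<in> P2" for \<nu> x y
    using sum_bound[OF that, of x y] abs_ge_zero[of "dF \<nu> x"] by linarith
  have N0: "0 < N"
    using N by simp
  obtain x where "F (partial_empirical N mstar N x) \<le> F mstar + real N * (2 * L / real N ^ 2)"
    using exists_partial_empirical_le[OF dF d2F[rule_format] dF_bound d2F_bound mstar N0 order_refl] by blast
  then have upper: "F (empirical N x) \<le> F mstar + 2 * L / real N"
    using N0 by (simp add: partial_empirical_eq_empirical power2_eq_square)
  have lower: "F mstar \<le> F (empirical N y)" for y
    using minimiser empirical_in_P2[OF N0] by blast
  have "F mstar \<le> (INF y. F (empirical N y))"
    using lower by (intro cINF_greatest) auto
  moreover have "(INF y. F (empirical N y)) \<le> F (empirical N x)"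
    using lower by (intro cINF_lower bdd_belowI) auto
  ultimately show ?thesis
    using upper by simp
qed

end
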